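(* Let $L=\{a^nb^m : n,m\in\mathbb{N},\ m\ge n\}$ over the alphabet $\{a,b\}$. Then $L\in\mathrm{RH}_1$ and $L\notin\mathrm{RD}$, i.e. $L$ is recognised by some history-deterministic $1$-VASS under reachability acceptance but by no deterministic $k$-VASS (for any $k$) under reachability acceptance.
   Context: Fix a finite alphabet $\Sigma$. A $k$-dimensional vector addition system with states ($k$-VASS) is a tuple $(Q,q_0,F,\delta)$ where $Q$ is a finite set of states, $q_0\in Q$ is initial, $F\subseteq Q$ is the set of accepting states, and $\delta\subseteq Q\times\Sigma\times\mathbb{Z}^k\times Q$ is a finite set of transitions (no $\varepsilon$-transitions). A run on a word $w=a_1\cdots a_n$ is a sequence of transitions $(p_{i-1},a_i,d_i,p_i)$ with $p_0=q_0$ such that the counter vectors $v_0=\vec 0$, $v_i=v_{i-1}+d_i$ all lie in $\mathbb{N}^k$. Under reachability acceptance the run is accepting if $p_n\in F$ and $v_n=\vec 0$. The language is the set of words having an accepting run. A VASS is deterministic if for every state $q$ and letter $a$ there is at most one transition $(q,a,d,q')$. A VASS is history-deterministic if there is a resolver, i.e. a function $r$ mapping each finite sequence of transitions and each letter $a$ to a transition labelled $a$, such that for every word $w$ in the language, the sequence of transitions obtained by successively applying $r$ to the letters of $w$ is a run on $w$ (counters stay nonnegative) and is accepting. $\mathrm{RD}_k$ (resp. $\mathrm{RH}_k$) is the class of languages recognised by deterministic (resp. history-deterministic) $k$-VASS under reachability acceptance, and $\mathrm{RD}=\bigcup_{k\ge1}\mathrm{RD}_k$. *)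

theory Defs
  imports Main
begin

datatype ab = A | B

type_synonym ('q,'a) trans = "'q \<times> 'a \<times> int list \<times> 'q"

record ('q,'a) vass =
  states :: "'q set"
  init :: 'q
  final :: "'q set"
  delta :: "('q,'a) trans set"

definition is_vass :: "'a set \<Rightarrow> nat \<Rightarrow> ('q,'a) vass \<Rightarrow> bool" where
  "is_vass Sig k V \<longleftrightarrow> finite (states V) \<and> init V \<in> states V \<and> final V \<subseteq> states V
     \<and> finite (delta V)
     \<and> (\<forall>(p,a,d,q) \<in> delta V. p \<in> states V \<and> q \<in> states V \<and> a \<in> Sig \<and> length d = k)"

definition vadd :: "int list \<Rightarrow> int list \<Rightarrow> int list" where
  "vadd v d = map2 (+) v d"

definition zerov :: "nat \<Rightarrow> int list" where
  "zerov k = replicate k 0"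

fun run_from :: "('q,'a) vass \<Rightarrow> 'q \<Rightarrow> int list \<Rightarrow> ('q,'a) trans list \<Rightarrow> ('q \<times> int list) option" where
  "run_from V p v [] = Some (p, v)"
| "run_from V p v ((p',a,d,q) # ts) =
     (if (p',a,d,q) \<in> delta V \<and> p' = p \<and> (\<forall>x \<in> set (vadd v d). x \<ge> 0)
      then run_from V q (vadd v d) ts else None)"

definition label :: "('q,'a) trans \<Rightarrow> 'a" where
  "label t = fst (snd t)"

definition is_run :: "nat \<Rightarrow> ('q,'a) vass \<Rightarrow> 'a list \<Rightarrow> ('q,'a) trans list \<Rightarrow> bool" where
  "is_run k V w ts \<longleftrightarrow> map label ts = w \<and> run_from V (init V) (zerov k) ts \<noteq> None"

definition is_accepting_run :: "nat \<Rightarrow> ('q,'a) vass \<Rightarrow> 'a list \<Rightarrow> ('q,'a) trans list \<Rightarrow> bool" where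
  "is_accepting_run k V w ts \<longleftrightarrow> map label ts = w \<and>
     (\<exists>q. q \<in> final V \<and> run_from V (init V) (zerov k) ts = Some (q, zerov k))"

definition lang :: "nat \<Rightarrow> ('q,'a) vass \<Rightarrow> 'a list set" where
  "lang k V = {w. \<exists>ts. is_accepting_run k V w ts}"

definition deterministic :: "('q,'a) vass \<Rightarrow> bool" where
  "deterministic V \<longleftrightarrow> (\<forall>p a d q d' q'. (p,a,d,q) \<in> delta V \<longrightarrow> (p,a,d',q') \<in> delta V
       \<longrightarrow> d = d' \<and> q = q')"

fun resolve_aux :: "(('q,'a) trans list \<Rightarrow> 'a \<Rightarrow> ('q,'a) trans) \<Rightarrow> ('q,'a) trans list \<Rightarrow> 'a list \<Rightarrow> ('q,'a) trans list" where
  "resolve_aux r h [] = h"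
| "resolve_aux r h (a # w) = resolve_aux r (h @ [r h a]) w"

definition resolve :: "(('q,'a) trans list \<Rightarrow> 'a \<Rightarrow> ('q,'a) trans) \<Rightarrow> 'a list \<Rightarrow> ('q,'a) trans list" where
  "resolve r w = resolve_aux r [] w"

definition is_resolver :: "nat \<Rightarrow> ('q,'a) vass \<Rightarrow> (('q,'a) trans list \<Rightarrow> 'a \<Rightarrow> ('q,'a) trans) \<Rightarrow> bool" where
  "is_resolver k V r \<longleftrightarrow>
     (\<forall>h a. r h a \<in> delta V \<and> label (r h a) = a) \<and>
     (\<forall>w \<in> lang k V. is_accepting_run k V w (resolve r w))"

definition history_deterministic :: "nat \<Rightarrow> ('q,'a) vass \<Rightarrow> bool" where
  "history_deterministic k V \<longleftrightarrow> (\<exists>r. is_resolver k V r)"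

text \<open>Classes RD_k and RH_k over alphabet Sig (state type: nat, w.l.o.g.).\<close>
definition RD :: "'a set \<Rightarrow> nat \<Rightarrow> 'a list set set" where
  "RD Sig k = {L. \<exists>V :: (nat,'a) vass. is_vass Sig k V \<and> deterministic V \<and> lang k V = L}"

definition RH :: "'a set \<Rightarrow> nat \<Rightarrow> 'a list set set" where
  "RH Sig k = {L. \<exists>V :: (nat,'a) vass. is_vass Sig k V \<and> history_deterministic k V \<and> lang k V = L}"

definition RD_all :: "'a set \<Rightarrow> 'a list set set" where
  "RD_all Sig = (\<Union>k\<in>{k. k \<ge> 1}. RD Sig k)"

definition Lab :: "ab list set" where
  "Lab = {replicate n A @ replicate m B | n m. m \<ge> n}"

end

(* A 1-VASS for Lab counts the a's and, on each b, either decrements the counter or leaves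
   it unchanged; it accepts a^n b^m exactly when n <= m. It is history-deterministic: the
   resolver decrements exactly while fewer b's than a's have been read (its source state is
   1 as soon as a b has been read), and this run ends with counter 0 whenever n <= m.

   Against determinism: the configuration reached on a^n is then unique, and two exponents
   i < j lead to the same state. Both a^i b^j and a^j b^j are accepted, and from that state
   the run on b^j is unique; since a fixed transition sequence determines its start vector
   from its end vector, the counters after a^i and a^j agree as well. Hence a^j b^i is
   accepted together with a^i b^i, although i < j. *)

theory Submission
  imports Defs
begin

lemma run_from_append:
  "run_from V p v (xs @ ys) =
     (case run_from V p v xs of None \<Rightarrow> None | Some (q, u) \<Rightarrow> run_from V q u ys)"
  by (induction xs arbitrary: p v) auto

lemma run_from_states:
  assumes "is_vass Sig k V" "p \<in> states V" "run_from V p v ts = Some (q, u)"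
  shows "q \<in> states V"
  using assms(2,3)
proof (induction ts arbitrary: p v)
  case (Cons t ts)
  obtain p' a d q' where t: "t = (p', a, d, q')" by (cases t)
  with Cons.prems have "t \<in> delta V" "run_from V q' (vadd v d) ts = Some (q, u)"
    by (auto split: if_splits)
  with assms(1) Cons.IH show ?case by (auto simp: is_vass_def t)
qed simp

lemma run_from_length:
  assumes "is_vass Sig k V" "length v = k" "run_from V p v ts = Some (q, u)"
  shows "length u = k"
  using assms(2,3)
proof (induction ts arbitrary: p v)
  case (Cons t ts)
  obtain p' a d q' where t: "t = (p', a, d, q')" by (cases t)
  with Cons.prems have "t \<in> delta V" "run_from V q' (vadd v d) ts = Some (q, u)"
    by (auto split: if_splits)
  moreover from this(1) have "length (vadd v d) = k"
    using assms(1) Cons.prems(1) by (auto simp: is_vass_def t vadd_def)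
  ultimately show ?case using Cons.IH by blast
qed simp

lemma vadd_cancel:
  assumes "length v = length d" "length v' = length d" "vadd v d = vadd v' d"
  shows "v = v'"
proof (rule nth_equalityI)
  fix l assume "l < length v"
  moreover have "vadd v d ! l = vadd v' d ! l" using assms(3) by simp
  ultimately show "v ! l = v' ! l" using assms(1,2) by (simp add: vadd_def)
qed (use assms in simp)

lemma run_from_cancel:
  assumes "is_vass Sig k V" "length v = k" "length v' = k"
    "run_from V p v ts = Some (q, u)" "run_from V p v' ts = Some (q', u)"
  shows "v = v'"
  using assms(2-)
proof (induction ts arbitrary: p v v')
  case (Cons t ts)
  obtain p' a d q'' where t: "t = (p', a, d, q'')" by (cases t)
  with Cons.prems have "t \<in> delta V"
    and "run_from V q'' (vadd v d) ts = Some (q, u)" "run_from V q'' (vadd v' d) ts = Some (q', u)"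
    by (auto split: if_splits)
  moreover from \<open>t \<in> delta V\<close> assms(1) have "length d = k" by (auto simp: is_vass_def t)
  ultimately have "vadd v d = vadd v' d"
    using Cons by (auto simp: vadd_def)
  with Cons.prems \<open>length d = k\<close> show ?case using vadd_cancel[of v d v'] by simp
qed simp

lemma deterministic_run_unique:
  assumes "deterministic V" "run_from V p v ts \<noteq> None" "run_from V p v' ts' \<noteq> None"
    "map label ts = map label ts'"
  shows "ts = ts'"
  using assms(2-)
proof (induction ts arbitrary: p v v' ts')
  case (Cons t ts)
  obtain t' ts'' where ts': "ts' = t' # ts''" using Cons.prems(3) by (cases ts') auto
  obtain p0 a d q0 where t: "t = (p0, a, d, q0)" by (cases t)
  obtain p1 a1 d1 q1 where t': "t' = (p1, a1, d1, q1)" by (cases t')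
  from Cons.prems(1) have t_run: "t \<in> delta V" "p0 = p" "run_from V q0 (vadd v d) ts \<noteq> None"
    by (auto simp: t split: if_splits)
  from Cons.prems(2) have t'_run: "t' \<in> delta V" "p1 = p" "run_from V q1 (vadd v' d1) ts'' \<noteq> None"
    by (auto simp: t' ts' split: if_splits)
  have "a1 = a" using Cons.prems(3) by (simp add: ts' t t' label_def)
  with assms(1) t_run t'_run have "t' = t"
    unfolding deterministic_def t t' by blast
  moreover have "ts = ts''"
    using Cons.IH[OF t_run(3)] t'_run(3) Cons.prems(3) \<open>t' = t\<close> by (simp add: ts' t t')
  ultimately show ?case by (simp add: ts')
qed simp

definition reaches :: "('q,'a) vass \<Rightarrow> 'q \<Rightarrow> int list \<Rightarrow> 'a list \<Rightarrow> 'q \<Rightarrow> int list \<Rightarrow> bool" where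
  "reaches V p v w q u \<longleftrightarrow> (\<exists>ts. map label ts = w \<and> run_from V p v ts = Some (q, u))"

lemma lang_iff_reaches:
  "w \<in> lang k V \<longleftrightarrow> (\<exists>q \<in> final V. reaches V (init V) (zerov k) w q (zerov k))"
  by (auto simp: lang_def is_accepting_run_def reaches_def)

lemma reaches_append:
  "reaches V p v (x @ y) q u \<longleftrightarrow> (\<exists>p' v'. reaches V p v x p' v' \<and> reaches V p' v' y q u)"
proof
  assume "reaches V p v (x @ y) q u"
  then obtain ts where ts: "map label ts = x @ y" "run_from V p v ts = Some (q, u)"
    by (auto simp: reaches_def)
  let ?n = "length x"
  have "map label (take ?n ts) = x" "map label (drop ?n ts) = y"
    using ts(1) by (metis append_eq_conv_conj length_map take_map drop_map)+
  moreover obtain p' v' where "run_from V p v (take ?n ts) = Some (p', v')"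
    "run_from V p' v' (drop ?n ts) = Some (q, u)"
    using ts(2) run_from_append[of V p v "take ?n ts" "drop ?n ts"]
    by (auto split: option.splits)
  ultimately show "\<exists>p' v'. reaches V p v x p' v' \<and> reaches V p' v' y q u"
    unfolding reaches_def by blast
next
  assume "\<exists>p' v'. reaches V p v x p' v' \<and> reaches V p' v' y q u"
  then obtain p' v' ts1 ts2 where "map label ts1 = x" "run_from V p v ts1 = Some (p', v')"
    "map label ts2 = y" "run_from V p' v' ts2 = Some (q, u)"
    by (auto simp: reaches_def)
  then show "reaches V p v (x @ y) q u"
    unfolding reaches_def by (auto simp: run_from_append intro!: exI[of _ "ts1 @ ts2"])
qed

lemma deterministic_reaches_unique:
  assumes "deterministic V" "reaches V p v w q u" "reaches V p v w q' u'"
  shows "q' = q \<and> u' = u"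
  using assms deterministic_run_unique[OF assms(1)] unfolding reaches_def
  by (metis option.distinct(1) option.inject prod.inject)

lemma deterministic_reaches_cancel:
  assumes "is_vass Sig k V" "deterministic V" "length v = k" "length v' = k"
    "reaches V p v w q u" "reaches V p v' w q' u"
  shows "v = v'"
proof -
  obtain ts ts' where "map label ts = w" "run_from V p v ts = Some (q, u)"
    "map label ts' = w" "run_from V p v' ts' = Some (q', u)"
    using assms(5,6) by (auto simp: reaches_def)
  moreover from this have "ts' = ts"
    using deterministic_run_unique[OF assms(2)] by (metis option.distinct(1))
  ultimately show ?thesis using run_from_cancel[OF assms(1,3,4)] by blast
qed

lemma deterministic_accepts_suffix:
  assumes "deterministic V" "reaches V (init V) (zerov k) u p v" "u @ x \<in> lang k V"
  shows "\<exists>q \<in> final V. reaches V p v x q (zerov k)"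
  using assms deterministic_reaches_unique[OF assms(1)]
  unfolding lang_iff_reaches reaches_append by metis

lemma deterministic_lang_congruence:
  assumes "deterministic V" "reaches V (init V) (zerov k) u p v"
    "reaches V (init V) (zerov k) u' p v" "u @ x \<in> lang k V"
  shows "u' @ x \<in> lang k V"
  using deterministic_accepts_suffix[OF assms(1,2,4)] assms(3)
  unfolding lang_iff_reaches reaches_append by blast

lemma deterministic_counters_determined:
  assumes "is_vass Sig k V" "deterministic V"
    "reaches V (init V) (zerov k) u p v" "reaches V (init V) (zerov k) u' p v'"
    "u @ x \<in> lang k V" "u' @ x \<in> lang k V"
  shows "v = v'"
proof -
  obtain q q' where "reaches V p v x q (zerov k)" "reaches V p v' x q' (zerov k)"
    using deterministic_accepts_suffix[OF assms(2)] assms(3-) by metis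
  moreover have "length v = k" "length v' = k"
    using assms(3,4) run_from_length[OF assms(1)]
    unfolding reaches_def zerov_def by (metis length_replicate)+
  ultimately show ?thesis using deterministic_reaches_cancel[OF assms(1,2)] by blast
qed

lemma replicate_A_B_inject:
  assumes "replicate j A @ replicate i B = replicate n A @ replicate m B"
  shows "j = n \<and> i = m"
proof -
  have "j = n"
    using arg_cong[OF assms, of "filter ((=) A)"] by (simp add: filter_replicate)
  with arg_cong[OF assms, of length] show ?thesis by simp
qed

lemma replicate_A_B_in_Lab [simp]: "replicate n A @ replicate m B \<in> Lab \<longleftrightarrow> n \<le> m"
  unfolding Lab_def using replicate_A_B_inject by blast

lemma Lab_not_deterministic:
  assumes vass: "is_vass Sig k V" and det: "deterministic V"
  shows "lang k V \<noteq> Lab"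
proof
  assume L: "lang k V = Lab"
  have "\<exists>p v. reaches V (init V) (zerov k) (replicate n A) p v" for n
    using replicate_A_B_in_Lab[of n n] unfolding L[symmetric] lang_iff_reaches reaches_append
    by blast
  then obtain st cnt where reach: "\<And>n. reaches V (init V) (zerov k) (replicate n A) (st n) (cnt n)"
    by metis
  have "st n \<in> states V" for n
    using reach[of n] run_from_states[OF vass] vass unfolding reaches_def is_vass_def by blast
  then have "\<not> inj_on st {..card (states V)}"
    using card_inj_on_le[of st "{..card (states V)}" "states V"] vass
    by (auto simp: is_vass_def)
  then obtain i j where "i < j" "st i = st j"
    unfolding inj_on_def by (metis linorder_neqE_nat)
  have "cnt i = cnt j"
    using deterministic_counters_determined[OF vass det reach[of i] reach[of j, folded \<open>st i = st j\<close>],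
        where x = "replicate j B"] \<open>i < j\<close> by (simp add: L)
  then have "replicate j A @ replicate i B \<in> lang k V"
    using deterministic_lang_congruence[OF det reach[of i],
        OF reach[of j, folded \<open>st i = st j\<close> \<open>cnt i = cnt j\<close>], where x = "replicate i B"]
    by (simp add: L)
  with L \<open>i < j\<close> show False by simp
qed

definition Lab_vass :: "(nat, ab) vass" where
  "Lab_vass = \<lparr>states = {0, 1}, init = 0, final = {0, 1},
     delta = {(0, A, [1], 0), (0, B, [-1], 1), (0, B, [0], 1), (1, B, [-1], 1), (1, B, [0], 1)}\<rparr>"

lemma Lab_vass_simps [simp]:
  "states Lab_vass = {0, 1}" "init Lab_vass = 0" "final Lab_vass = {0, 1}"
  "delta Lab_vass = {(0, A, [1], 0), (0, B, [-1], 1), (0, B, [0], 1), (1, B, [-1], 1), (1, B, [0], 1)}"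
  by (simp_all add: Lab_vass_def)

lemma is_vass_Lab_vass: "is_vass UNIV 1 Lab_vass"
  by (simp add: is_vass_def)

lemma vadd_singleton [simp]: "vadd [c] [d] = [c + d]"
  by (simp add: vadd_def)

lemma run_from_Lab_vass_1:
  "run_from Lab_vass 1 [c] ts = Some (q, u) \<Longrightarrow>
     \<exists>j e. u = [e] \<and> map label ts = replicate j B \<and> c - int j \<le> e"
proof (induction ts arbitrary: c)
  case (Cons t ts)
  then obtain d where "t = (1, B, [d], 1)" "-1 \<le> d" "run_from Lab_vass 1 [c + d] ts = Some (q, u)"
    by (cases t) (auto split: if_splits)
  moreover obtain j e where "u = [e]" "map label ts = replicate j B" "c + d - int j \<le> e"
    using Cons.IH[OF calculation(3)] by blast
  ultimately have "u = [e] \<and> map label (t # ts) = replicate (Suc j) B \<and> c - int (Suc j) \<le> e"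
    by (simp add: label_def)
  then show ?case by blast
qed force

lemma run_from_Lab_vass_0:
  "run_from Lab_vass 0 [c] ts = Some (q, u) \<Longrightarrow>
     \<exists>i j e. u = [e] \<and> map label ts = replicate i A @ replicate j B \<and> c + int i - int j \<le> e"
proof (induction ts arbitrary: c)
  case (Cons t ts)
  consider "t = (0, A, [1], 0)" "run_from Lab_vass 0 [c + 1] ts = Some (q, u)"
    | d where "t = (0, B, [d], 1)" "-1 \<le> d" "run_from Lab_vass 1 [c + d] ts = Some (q, u)"
    using Cons.prems by (cases t) (auto split: if_splits)
  then show ?case
  proof cases
    case 1
    then obtain i j e where "u = [e]" "map label ts = replicate i A @ replicate j B"
      "c + 1 + int i - int j \<le> e"
      using Cons.IH by blast
    with 1 have "u = [e] \<and> map label (t # ts) = replicate (Suc i) A @ replicate j B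
        \<and> c + int (Suc i) - int j \<le> e"
      by (simp add: label_def)
    then show ?thesis by blast
  next
    case (2 d)
    then obtain j e where "u = [e]" "map label ts = replicate j B" "c + d - int j \<le> e"
      using run_from_Lab_vass_1 by blast
    with 2 have "u = [e] \<and> map label (t # ts) = replicate 0 A @ replicate (Suc j) B
        \<and> c + int 0 - int (Suc j) \<le> e"
      by (simp add: label_def)
    then show ?thesis by blast
  qed
qed force

lemma lang_Lab_vass_subset: "lang 1 Lab_vass \<subseteq> Lab"
proof
  fix w assume "w \<in> lang 1 Lab_vass"
  then obtain ts q where "map label ts = w" "run_from Lab_vass 0 [0] ts = Some (q, [0])"
    by (auto simp: lang_def is_accepting_run_def zerov_def)
  with run_from_Lab_vass_0 show "w \<in> Lab" by force
qed

definition Lab_resolver :: "(nat, ab) trans list \<Rightarrow> ab \<Rightarrow> (nat, ab) trans" where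
  "Lab_resolver h a = (if a = A then (0, A, [1], 0) else
     (if B \<in> set (map label h) then 1 else 0, B,
      if count_list (map label h) B < count_list (map label h) A then [-1] else [0], 1))"

definition resolver_B_trans :: "nat \<Rightarrow> nat \<Rightarrow> (nat, ab) trans" where
  "resolver_B_trans n j = (if j = 0 then 0 else 1, B, if j < n then [-1] else [0], 1)"

lemma Lab_resolver_trans: "Lab_resolver h a \<in> delta Lab_vass \<and> label (Lab_resolver h a) = a"
  by (cases a) (auto simp: Lab_resolver_def label_def)

lemma count_list_replicate: "count_list (replicate n x) y = (if x = y then n else 0)"
  by (induction n) auto

lemma resolve_aux_append: "resolve_aux r h (u @ w) = resolve_aux r (resolve_aux r h u) w"
  by (induction u arbitrary: h) auto

lemma resolve_aux_Lab_resolver_A: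
  "resolve_aux Lab_resolver h (replicate n A) = h @ replicate n (0, A, [1], 0)"
  by (induction n arbitrary: h) (auto simp: Lab_resolver_def replicate_append_same)

lemma resolve_aux_Lab_resolver_B:
  "resolve_aux Lab_resolver (replicate n (0, A, [1], 0) @ map (resolver_B_trans n) [0..<j]) (replicate m B)
     = replicate n (0, A, [1], 0) @ map (resolver_B_trans n) [0..<j + m]"
proof (induction m arbitrary: j)
  case (Suc m)
  let ?h = "replicate n (0, A, [1], 0) @ map (resolver_B_trans n) [0..<j]"
  have "map label ?h = replicate n A @ replicate j B"
    by (simp add: label_def resolver_B_trans_def comp_def map_replicate_const)
  then have "Lab_resolver ?h B = resolver_B_trans n j"
    by (auto simp: Lab_resolver_def resolver_B_trans_def count_list_replicate)
  then show ?case using Suc.IH[of "Suc j"] by simp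
qed simp

lemma resolve_Lab_resolver:
  "resolve Lab_resolver (replicate n A @ replicate m B)
     = replicate n (0, A, [1], 0) @ map (resolver_B_trans n) [0..<m]"
  using resolve_aux_Lab_resolver_B[of n 0 m]
  by (simp add: resolve_def resolve_aux_append resolve_aux_Lab_resolver_A)

lemma run_from_Lab_vass_A:
  "0 \<le> c \<Longrightarrow> run_from Lab_vass 0 [c] (replicate n (0, A, [1], 0)) = Some (0, [c + int n])"
  by (induction n arbitrary: c) auto

lemma run_from_Lab_vass_B:
  "run_from Lab_vass 0 [int n] (map (resolver_B_trans n) [0..<m])
     = Some (if m = 0 then 0 else 1, [int n - int (min n m)])"
  by (induction m) (auto simp: run_from_append resolver_B_trans_def)

lemma Lab_resolver_accepts: "w \<in> Lab \<Longrightarrow> is_accepting_run 1 Lab_vass w (resolve Lab_resolver w)"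
proof -
  assume "w \<in> Lab"
  then obtain n m where w: "w = replicate n A @ replicate m B" "n \<le> m"
    unfolding Lab_def by auto
  have "run_from Lab_vass 0 [0] (resolve Lab_resolver w) = Some (if m = 0 then 0 else 1, [0])"
    using w run_from_Lab_vass_A[of 0 n] run_from_Lab_vass_B[of n m]
    by (simp add: resolve_Lab_resolver run_from_append)
  moreover have "map label (resolve Lab_resolver w) = w"
    using w by (simp add: resolve_Lab_resolver label_def resolver_B_trans_def comp_def map_replicate_const)
  ultimately show ?thesis unfolding is_accepting_run_def zerov_def by auto
qed

lemma lang_Lab_vass: "lang 1 Lab_vass = Lab"
  using lang_Lab_vass_subset Lab_resolver_accepts unfolding lang_def by blast

lemma Lab_in_RH: "Lab \<in> RH UNIV 1"
proof -
  have "is_resolver 1 Lab_vass Lab_resolver"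
    unfolding is_resolver_def using Lab_resolver_trans Lab_resolver_accepts lang_Lab_vass by auto
  then show ?thesis
    unfolding RH_def history_deterministic_def using is_vass_Lab_vass lang_Lab_vass by blast
qed

theorem mainTheorem3:
  shows "Lab \<in> RH UNIV 1 \<and> Lab \<notin> RD_all UNIV"
  using Lab_in_RH Lab_not_deterministic unfolding RD_all_def RD_def by blast

end
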